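(* Let $m,n\ge3$. The cycles $C_m$ and $C_n$ are never strongly disjoint. Moreover, $C_m$ and $C_n$ are weakly disjoint if and only if $\gcd(m,n)=1$.
   Context: A weight function on finite $U$ is $\alpha:U\times U\to\mathbb{R}$, $\alpha\ge0$, symmetric, summing to $1$; degree $p(u)=\sum_{u'}\alpha(u,u')$; a graph is $(U,\alpha)$. $C_k$ ($k\ge3$) is the cycle on vertices $u_1,\dots,u_k$ with $\alpha(u_i,u_{i\pm1})=1/(2k)$ (indices mod $k$) and all other weights $0$. For graphs $(U,\alpha)$, $(V,\beta)$ with degrees $p,q$, a weight joining is a weight function $\gamma$ on $U\times V$ with degree $r(u,v)=\sum_{(u',v')}\gamma((u,v),(u',v'))$ such that $\sum_v r(u,v)=p(u)$, $\sum_u r(u,v)=q(v)$, $p(u)\sum_{\tilde v}\gamma((u,v),(u',\tilde v))=\alpha(u,u')r(u,v)$ and $q(v)\sum_{\tilde u}\gamma((u,v),(\tilde u,v'))=\beta(v,v')r(u,v)$ for all $u,u',v,v'$. The graphs are strongly disjoint if the only weight joining is $\alpha\otimes\beta$, $(\alpha\otimes\beta)((u,v),(u',v'))=\alpha(u,u')\beta(v,v')$; weakly disjoint if every weight joining has degree $r(u,v)=p(u)q(v)$. *)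

theory Defs
  imports Complex_Main
begin

text \<open>A graph is a pair (U, alpha) with U a finite carrier and alpha a weight function on U.
  Functions are only considered on the carrier.\<close>

definition weight_fun :: "'a set \<Rightarrow> ('a \<Rightarrow> 'a \<Rightarrow> real) \<Rightarrow> bool" where
  "weight_fun U \<alpha> \<longleftrightarrow> finite U \<and>
     (\<forall>u\<in>U. \<forall>u'\<in>U. \<alpha> u u' \<ge> 0 \<and> \<alpha> u u' = \<alpha> u' u) \<and>
     (\<Sum>u\<in>U. \<Sum>u'\<in>U. \<alpha> u u') = 1"

definition wdeg :: "'a set \<Rightarrow> ('a \<Rightarrow> 'a \<Rightarrow> real) \<Rightarrow> 'a \<Rightarrow> real" where
  "wdeg U \<alpha> u = (\<Sum>u'\<in>U. \<alpha> u u')"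

text \<open>The cycle C_k on vertices 0,...,k-1 (u_i = i-1).\<close>
definition cycle_weight :: "nat \<Rightarrow> nat \<Rightarrow> nat \<Rightarrow> real" where
  "cycle_weight k i j = (if j = (i + 1) mod k \<or> i = (j + 1) mod k then 1 / (2 * real k) else 0)"

definition cycle_vertices :: "nat \<Rightarrow> nat set" where
  "cycle_vertices k = {..<k}"

definition weight_joining ::
  "'a set \<Rightarrow> ('a \<Rightarrow> 'a \<Rightarrow> real) \<Rightarrow> 'b set \<Rightarrow> ('b \<Rightarrow> 'b \<Rightarrow> real)
    \<Rightarrow> ('a \<times> 'b \<Rightarrow> 'a \<times> 'b \<Rightarrow> real) \<Rightarrow> bool" where
  "weight_joining U \<alpha> V \<beta> \<gamma> \<longleftrightarrow> weight_fun (U \<times> V) \<gamma> \<and>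
     (\<forall>u\<in>U. (\<Sum>v\<in>V. wdeg (U \<times> V) \<gamma> (u, v)) = wdeg U \<alpha> u) \<and>
     (\<forall>v\<in>V. (\<Sum>u\<in>U. wdeg (U \<times> V) \<gamma> (u, v)) = wdeg V \<beta> v) \<and>
     (\<forall>u\<in>U. \<forall>v\<in>V. \<forall>u'\<in>U.
        wdeg U \<alpha> u * (\<Sum>v'\<in>V. \<gamma> (u, v) (u', v')) = \<alpha> u u' * wdeg (U \<times> V) \<gamma> (u, v)) \<and>
     (\<forall>u\<in>U. \<forall>v\<in>V. \<forall>v'\<in>V.
        wdeg V \<beta> v * (\<Sum>u'\<in>U. \<gamma> (u, v) (u', v')) = \<beta> v v' * wdeg (U \<times> V) \<gamma> (u, v))"

definition strongly_disjoint ::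
  "'a set \<Rightarrow> ('a \<Rightarrow> 'a \<Rightarrow> real) \<Rightarrow> 'b set \<Rightarrow> ('b \<Rightarrow> 'b \<Rightarrow> real) \<Rightarrow> bool" where
  "strongly_disjoint U \<alpha> V \<beta> \<longleftrightarrow>
     (\<forall>\<gamma>. weight_joining U \<alpha> V \<beta> \<gamma> \<longrightarrow>
        (\<forall>x\<in>U \<times> V. \<forall>y\<in>U \<times> V. \<gamma> x y = \<alpha> (fst x) (fst y) * \<beta> (snd x) (snd y)))"

definition weakly_disjoint ::
  "'a set \<Rightarrow> ('a \<Rightarrow> 'a \<Rightarrow> real) \<Rightarrow> 'b set \<Rightarrow> ('b \<Rightarrow> 'b \<Rightarrow> real) \<Rightarrow> bool" where
  "weakly_disjoint U \<alpha> V \<beta> \<longleftrightarrow>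
     (\<forall>\<gamma>. weight_joining U \<alpha> V \<beta> \<gamma> \<longrightarrow>
        (\<forall>u\<in>U. \<forall>v\<in>V. wdeg (U \<times> V) \<gamma> (u, v) = wdeg U \<alpha> u * wdeg V \<beta> v))"

end

theory Submission
  imports Defs
begin

(* Let r be the degree of a weight joining of C_m and C_n, extended periodically to Z^2.
   Computing the mass that the joining moves from the fibre {v = b} to the fibre {u = a} once
   through each of the two transition conditions gives the discrete wave equation
   r(a+1,b) + r(a-1,b) = r(a,b+1) + r(a,b-1).  By d'Alembert's formula the same identity holds
   with steps k instead of 1 for every k; for k = n the right-hand side is 2 r(a,b), so
   a |-> r(a,b) is harmonic with step n and periodic with period m, hence constant when
   gcd(m,n) = 1, which forces r to be the product of the degrees.
   Conversely, for every common divisor d of m and n the diagonal joining, in which both walks step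
   by +1 or both by -1 and which lives on the pairs with u = v (mod d), differs from the product
   joining, and for d = gcd(m,n) > 1 its degree vanishes at (0,1). *)

lemma periodic_multiple:
  fixes h :: "int \<Rightarrow> 'a"
  assumes per: "\<And>a. h (a + p) = h a"
  shows "h (a + p * t) = h a"
proof -
  have nonneg: "h (b + p * int k) = h b" for b k
  proof (induction k)
    case (Suc k)
    have "h (b + p * int (Suc k)) = h (b + p * int k + p)" by (simp add: algebra_simps)
    with per Suc show ?case by simp
  qed simp
  show ?thesis
  proof (cases "0 \<le> t")
    case True
    then show ?thesis using nonneg[of a "nat t"] by simp
  next
    case False
    then have "h (a + p * t + p * int (nat (- t))) = h a" by simp
    then show ?thesis using nonneg[of "a + p * t" "nat (- t)"] by simp
  qed
qed

lemma periodic_coprime_const: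
  fixes h :: "int \<Rightarrow> 'a"
  assumes "coprime p q" and per_p: "\<And>a. h (a + p) = h a" and per_q: "\<And>a. h (a + q) = h a"
  shows "h a = h b"
proof -
  obtain s t where "s * p + t * q = 1"
    using bezout_int[of p q] \<open>coprime p q\<close> by (auto simp: coprime_iff_gcd_eq_1)
  then have per_1: "h (a + 1) = h a" for a
    using periodic_multiple[of h, OF per_p, of a s]
      periodic_multiple[of h, OF per_q, of "a + p * s" t]
    by (simp add: algebra_simps)
  show ?thesis
    using periodic_multiple[of h, OF per_1, of 0 a] periodic_multiple[of h, OF per_1, of 0 b] by simp
qed

lemma harmonic_periodic_const:
  fixes h :: "int \<Rightarrow> 'a :: real_vector"
  assumes "p \<noteq> 0" "coprime p q" and per: "\<And>a. h (a + p) = h a"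
    and harmonic: "\<And>a. h (a + q) - h a = h a - h (a - q)"
  shows "h a = h b"
proof -
  define c where "c a = h (a + q) - h a" for a
  have c_const: "c a = c 0" for a
  proof (rule periodic_coprime_const[OF \<open>coprime p q\<close>])
    show "c (a + p) = c a" for a using per[of a] per[of "a + q"] by (simp add: c_def algebra_simps)
    show "c (a + q) = c a" for a using harmonic[of "a + q"] by (simp add: c_def)
  qed
  have linear: "h (q * int k) = h 0 + real k *\<^sub>R c 0" for k
  proof (induction k)
    case (Suc k)
    have "h (q * int (Suc k)) = h (q * int k) + c (q * int k)" by (simp add: c_def algebra_simps)
    with Suc c_const show ?case by (simp add: algebra_simps)
  qed simp
  have "h (q * int (nat \<bar>p\<bar>)) = h 0"
    using periodic_multiple[of h, OF per, of 0 "q * sgn p"] by (simp add: abs_sgn mult_ac)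
  then have "c 0 = 0" using linear[of "nat \<bar>p\<bar>"] \<open>p \<noteq> 0\<close> by simp
  then have "h (a + q) = h a" for a using c_const by (simp add: c_def)
  then show ?thesis by (rule periodic_coprime_const[of p q h, OF \<open>coprime p q\<close> per])
qed

lemma discrete_wave_dalembert:
  fixes R :: "int \<Rightarrow> int \<Rightarrow> 'a :: ab_group_add"
  assumes wave: "\<And>a b. R (a + 1) b + R (a - 1) b = R a (b + 1) + R a (b - 1)"
  shows "R (a + int k) b + R (a - int k) b = R a (b + int k) + R a (b - int k)"
proof (induction k arbitrary: a b rule: induct_nat_012)
  case (ge2 k)
  let ?j = "int k + 1"
  have "R (a + ?j + 1) b + R (a - ?j - 1) b =
      (R (a + ?j + 1) b + R (a + ?j - 1) b) + (R (a - ?j + 1) b + R (a - ?j - 1) b)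
      - (R (a + int k) b + R (a - int k) b)"
    by (simp add: algebra_simps)
  also have "\<dots> = (R (a + ?j) (b + 1) + R (a - ?j) (b + 1))
      + (R (a + ?j) (b - 1) + R (a - ?j) (b - 1)) - (R a (b + int k) + R a (b - int k))"
    using wave[of "a + ?j" b] wave[of "a - ?j" b] ge2.IH(1)[of a b] by (simp add: algebra_simps)
  also have "\<dots> = R a (b + ?j + 1) + R a (b - ?j - 1)"
    using ge2.IH(2)[of a "b + 1"] ge2.IH(2)[of a "b - 1"] by (simp add: algebra_simps)
  finally show ?case by (simp add: algebra_simps)
qed (simp_all add: wave)

lemma weight_joining_balance:
  assumes J: "weight_joining U \<alpha> V \<beta> \<gamma>" and a: "a \<in> U" and b: "b \<in> V"
    and p: "\<forall>u\<in>U. wdeg U \<alpha> u \<noteq> 0" and q: "\<forall>v\<in>V. wdeg V \<beta> v \<noteq> 0"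
  shows "(\<Sum>u\<in>U. \<alpha> u a / wdeg U \<alpha> u * wdeg (U \<times> V) \<gamma> (u, b)) =
         (\<Sum>v\<in>V. \<beta> v b / wdeg V \<beta> v * wdeg (U \<times> V) \<gamma> (a, v))"
proof -
  have sym: "\<gamma> x y = \<gamma> y x" if "x \<in> U \<times> V" "y \<in> U \<times> V" for x y
    using J that unfolding weight_joining_def weight_fun_def by blast
  have "(\<Sum>u\<in>U. \<alpha> u a / wdeg U \<alpha> u * wdeg (U \<times> V) \<gamma> (u, b)) =
      (\<Sum>u\<in>U. \<Sum>v\<in>V. \<gamma> (u, b) (a, v))"
    using J a b p by (intro sum.cong) (auto simp: weight_joining_def field_simps)
  also have "\<dots> = (\<Sum>v\<in>V. \<Sum>u\<in>U. \<gamma> (a, v) (u, b))"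
    using a b by (subst sum.swap) (auto intro!: sum.cong sym)
  also have "\<dots> = (\<Sum>v\<in>V. \<beta> v b / wdeg V \<beta> v * wdeg (U \<times> V) \<gamma> (a, v))"
    using J a b q by (intro sum.cong) (auto simp: weight_joining_def field_simps)
  finally show ?thesis .
qed

definition cycle_succ :: "nat \<Rightarrow> nat \<Rightarrow> nat" where
  "cycle_succ m u = (u + 1) mod m"

definition cycle_pred :: "nat \<Rightarrow> nat \<Rightarrow> nat" where
  "cycle_pred m u = (u + m - 1) mod m"

lemma cycle_succ_less: "0 < m \<Longrightarrow> cycle_succ m u < m"
  by (simp add: cycle_succ_def)

lemma cycle_pred_less: "0 < m \<Longrightarrow> cycle_pred m u < m"
  by (simp add: cycle_pred_def)

lemma cycle_succ_eq_iff:
  assumes "u < m" "u' < m"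
  shows "u' = cycle_succ m u \<longleftrightarrow> u = cycle_pred m u'"
  using assms by (cases u') (auto simp: cycle_succ_def cycle_pred_def mod_if)

lemma cycle_succ_ne_pred: "3 \<le> m \<Longrightarrow> u < m \<Longrightarrow> cycle_succ m u \<noteq> cycle_pred m u"
  by (cases u) (auto simp: cycle_succ_def cycle_pred_def mod_if)

lemma int_cycle_succ: "int (cycle_succ m u) = (int u + 1) mod int m"
  by (simp add: cycle_succ_def zmod_int add.commute)

lemma int_cycle_pred:
  assumes "u < m"
  shows "int (cycle_pred m u) = (int u - 1) mod int m"
proof -
  have "int (u + m - 1) = (int u - 1) + int m" using assms by simp
  then show ?thesis by (simp add: cycle_pred_def zmod_int)
qed

lemma nat_mod_plus_1:
  assumes "0 < m"
  shows "nat ((a + 1) mod int m) = cycle_succ m (nat (a mod int m))"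
proof -
  have "int (cycle_succ m (nat (a mod int m))) = (a + 1) mod int m"
    using assms by (simp add: int_cycle_succ mod_add_left_eq)
  then show ?thesis by simp
qed

lemma nat_mod_minus_1:
  assumes "0 < m"
  shows "nat ((a - 1) mod int m) = cycle_pred m (nat (a mod int m))"
proof -
  have "nat (a mod int m) < m" using assms by (simp add: nat_less_iff)
  then have "int (cycle_pred m (nat (a mod int m))) = (a - 1) mod int m"
    using assms by (simp add: int_cycle_pred mod_diff_left_eq)
  then show ?thesis by simp
qed

lemma cycle_weight_commute: "cycle_weight m i j = cycle_weight m j i"
  by (auto simp: cycle_weight_def)

lemma cycle_weight_eq:
  assumes "3 \<le> m" "u < m" "u' < m"
  shows "cycle_weight m u u' =
    (of_bool (u' = cycle_succ m u) + of_bool (u' = cycle_pred m u)) / (2 * real m)"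
  using assms cycle_succ_ne_pred[OF assms(1,2)] cycle_succ_eq_iff[OF assms(3,2)]
  by (auto simp: cycle_weight_def cycle_succ_def)

lemma sum_cycle_weight:
  assumes "3 \<le> m" "u < m"
  shows "(\<Sum>u'<m. cycle_weight m u u' * f u') =
    (f (cycle_succ m u) + f (cycle_pred m u)) / (2 * real m)"
proof -
  have "(\<Sum>u'<m. cycle_weight m u u' * f u')
      = (\<Sum>u'<m. (of_bool (u' = cycle_succ m u) * f u' + of_bool (u' = cycle_pred m u) * f u')
          / (2 * real m))"
    using assms by (intro sum.cong) (auto simp: cycle_weight_eq algebra_simps)
  also have "\<dots> = (f (cycle_succ m u) + f (cycle_pred m u)) / (2 * real m)"
    using assms
    by (simp add: sum_divide_distrib[symmetric] sum.distrib cycle_succ_less cycle_pred_less)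
  finally show ?thesis .
qed

lemma wdeg_cycle:
  assumes "3 \<le> m" "u < m"
  shows "wdeg {..<m} (cycle_weight m) u = 1 / real m"
  using sum_cycle_weight[OF assms, of "\<lambda>_. 1"] by (simp add: wdeg_def)

lemma sum_cycle_transition:
  assumes "3 \<le> m" "a < m"
  shows "(\<Sum>u<m. cycle_weight m u a / wdeg {..<m} (cycle_weight m) u * f u) =
    (f (cycle_succ m a) + f (cycle_pred m a)) / 2"
proof -
  have "(\<Sum>u<m. cycle_weight m u a / wdeg {..<m} (cycle_weight m) u * f u) =
      real m * (\<Sum>u<m. cycle_weight m a u * f u)"
    using assms by (simp add: wdeg_cycle cycle_weight_commute[of m _ a] sum_distrib_left mult_ac)
  also have "\<dots> = (f (cycle_succ m a) + f (cycle_pred m a)) / 2"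
    using assms by (simp add: sum_cycle_weight)
  finally show ?thesis .
qed

lemma cycle_joining_wave:
  assumes m: "3 \<le> m" and n: "3 \<le> n"
    and J: "weight_joining {..<m} (cycle_weight m) {..<n} (cycle_weight n) \<gamma>"
    and a: "a < m" and b: "b < n"
  defines "r \<equiv> wdeg ({..<m} \<times> {..<n}) \<gamma>"
  shows "r (cycle_succ m a, b) + r (cycle_pred m a, b) = r (a, cycle_succ n b) + r (a, cycle_pred n b)"
proof -
  have "(\<Sum>u<m. cycle_weight m u a / wdeg {..<m} (cycle_weight m) u * r (u, b)) =
        (\<Sum>v<n. cycle_weight n v b / wdeg {..<n} (cycle_weight n) v * r (a, v))"
    unfolding r_def using m n a b by (intro weight_joining_balance[OF J]) (simp_all add: wdeg_cycle)
  then show ?thesis unfolding sum_cycle_transition[OF m a] sum_cycle_transition[OF n b] by simp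
qed

lemma wdeg_cycle_joining_coprime:
  assumes m: "3 \<le> m" and n: "3 \<le> n" and "coprime m n"
    and J: "weight_joining {..<m} (cycle_weight m) {..<n} (cycle_weight n) \<gamma>"
    and u: "u < m" and v: "v < n"
  shows "wdeg ({..<m} \<times> {..<n}) \<gamma> (u, v) = 1 / (real m * real n)"
proof -
  define r where "r = wdeg ({..<m} \<times> {..<n}) \<gamma>"
  define R where "R a b = r (nat (a mod int m), nat (b mod int n))" for a b
  have wave: "R (a + 1) b + R (a - 1) b = R a (b + 1) + R a (b - 1)" for a b
    using cycle_joining_wave[OF m n J, of "nat (a mod int m)" "nat (b mod int n)"] m n
    by (simp add: R_def r_def nat_mod_plus_1 nat_mod_minus_1 nat_less_iff)
  have harmonic: "R (a + int n) b - R a b = R a b - R (a - int n) b" for a b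
    using discrete_wave_dalembert[of R, OF wave, of a n b] by (simp add: R_def algebra_simps)
  have periodic: "R (a + int m) b = R a b" for a b
    by (simp add: R_def)
  have R_const: "R a (int v) = R 0 (int v)" for a
    by (rule harmonic_periodic_const[of "int m" "int n"])
      (use \<open>coprime m n\<close> m periodic harmonic in simp_all)
  then have r_const: "r (u', v) = R 0 (int v)" if "u' < m" for u'
    using that v R_const[of "int u'"] by (simp add: R_def flip: of_nat_mod)
  have "(\<Sum>u'<m. r (u', v)) = wdeg {..<n} (cycle_weight n) v"
    using J v by (simp add: weight_joining_def r_def)
  then have "real m * R 0 (int v) = 1 / real n"
    using n v by (simp add: r_const wdeg_cycle)
  then have "r (u, v) = 1 / (real m * real n)"
    using m n r_const[OF u] by (simp add: field_simps)
  then show ?thesis by (simp add: r_def)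
qed

lemma sum_of_bool_eq_lessThan:
  "b < (n :: nat) \<Longrightarrow> (\<Sum>v<n. of_bool (v = b)) = (1 :: 'a :: semiring_1)"
  unfolding of_bool_def by (subst sum.delta) auto

lemma sum_of_bool_mod_eq:
  assumes "d dvd n" "a < d"
  shows "(\<Sum>v<n. of_bool (v mod d = a) :: real) = real (n div d)"
proof -
  obtain k where n: "n = d * k" using assms(1) by blast
  have "(\<Sum>v<d * k. of_bool (v mod d = a) :: real) = real k"
  proof (induction k)
    case (Suc k)
    have "(\<Sum>v<d * Suc k. of_bool (v mod d = a) :: real)
        = (\<Sum>v<d * k. of_bool (v mod d = a)) + (\<Sum>v\<in>{d * k..<d + d * k}. of_bool (v mod d = a))"
      unfolding lessThan_atLeast0 mult_Suc_right by (rule sum.atLeastLessThan_concat[symmetric]) simp_all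
    also have "(\<Sum>v\<in>{d * k..<d + d * k}. of_bool (v mod d = a) :: real) = 1"
      using sum.shift_bounds_nat_ivl[of "\<lambda>v. of_bool (v mod d = a) :: real" 0 "d * k" d] assms(2)
      by simp
    finally show ?case using Suc by simp
  qed simp
  then show ?thesis using n assms(2) by simp
qed

lemma mod_Suc_eq_iff: "Suc u mod d = Suc v mod d \<longleftrightarrow> u mod d = v mod d"
  using nat_mod_eq_iff by auto

lemma cycle_succ_mod_dvd: "d dvd m \<Longrightarrow> cycle_succ m u mod d = (u + 1) mod d"
  by (simp add: cycle_succ_def mod_mod_cancel)

(* The two walks move in lockstep; d dividing m and n keeps u - v mod d invariant. *)
fun diagonal_joining :: "nat \<Rightarrow> nat \<Rightarrow> nat \<Rightarrow> nat \<times> nat \<Rightarrow> nat \<times> nat \<Rightarrow> real" where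
  "diagonal_joining m n d (u, v) (u', v') =
     of_bool (u mod d = v mod d) * real d / (2 * real m * real n) *
     (of_bool (u' = cycle_succ m u \<and> v' = cycle_succ n v) +
      of_bool (u' = cycle_pred m u \<and> v' = cycle_pred n v))"

lemma sum_diagonal_joining_snd:
  assumes "0 < n"
  shows "(\<Sum>v'<n. diagonal_joining m n d (u, v) (u', v')) =
    of_bool (u mod d = v mod d) * real d / (2 * real m * real n) *
    (of_bool (u' = cycle_succ m u) + of_bool (u' = cycle_pred m u))"
  unfolding diagonal_joining.simps of_bool_conj sum.distrib sum_distrib_left[symmetric]
  using assms by (simp add: sum_of_bool_eq_lessThan cycle_succ_less cycle_pred_less)

lemma sum_diagonal_joining_fst:
  assumes "0 < m"
  shows "(\<Sum>u'<m. diagonal_joining m n d (u, v) (u', v')) =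
    of_bool (u mod d = v mod d) * real d / (2 * real m * real n) *
    (of_bool (v' = cycle_succ n v) + of_bool (v' = cycle_pred n v))"
  unfolding diagonal_joining.simps of_bool_conj sum.distrib
    sum_distrib_left[symmetric] sum_distrib_right[symmetric]
  using assms by (simp add: sum_of_bool_eq_lessThan cycle_succ_less cycle_pred_less)

lemma wdeg_diagonal_joining:
  assumes "3 \<le> m" "3 \<le> n" "u < m"
  shows "wdeg ({..<m} \<times> {..<n}) (diagonal_joining m n d) (u, v) =
    of_bool (u mod d = v mod d) * real d / (real m * real n)"
proof -
  have "wdeg ({..<m} \<times> {..<n}) (diagonal_joining m n d) (u, v) =
      (\<Sum>u'<m. of_bool (u mod d = v mod d) * real d / (2 * real m * real n) *
        (of_bool (u' = cycle_succ m u) + of_bool (u' = cycle_pred m u)))"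
    unfolding wdeg_def sum.cartesian_product' using assms(2) by (simp only: sum_diagonal_joining_snd)
  also have "\<dots> = of_bool (u mod d = v mod d) * real d / (2 * real m * real n) *
      ((\<Sum>u'<m. of_bool (u' = cycle_succ m u)) + (\<Sum>u'<m. of_bool (u' = cycle_pred m u)))"
    by (simp only: sum.distrib flip: sum_distrib_left)
  also have "\<dots> = of_bool (u mod d = v mod d) * real d / (2 * real m * real n) * 2"
    using assms cycle_succ_less[of m u] cycle_pred_less[of m u]
    by (simp del: sum_of_bool_eq add: sum_of_bool_eq_lessThan)
  finally show ?thesis by simp
qed

lemma diagonal_joining_commute:
  assumes "d dvd m" "d dvd n" "u < m" "v < n" "u' < m" "v' < n"
  shows "diagonal_joining m n d (u, v) (u', v') = diagonal_joining m n d (u', v') (u, v)"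
proof -
  have pred_iff:
    "u = cycle_pred m u' \<longleftrightarrow> u' = cycle_succ m u" "v = cycle_pred n v' \<longleftrightarrow> v' = cycle_succ n v"
    "u' = cycle_pred m u \<longleftrightarrow> u = cycle_succ m u'" "v' = cycle_pred n v \<longleftrightarrow> v = cycle_succ n v'"
    using assms cycle_succ_eq_iff by metis+
  have class_succ: "cycle_succ m a mod d = cycle_succ n b mod d \<longleftrightarrow> a mod d = b mod d" for a b
    using assms(1,2) by (simp add: cycle_succ_mod_dvd mod_Suc_eq_iff)
  show ?thesis
  proof (cases "u' = cycle_succ m u \<and> v' = cycle_succ n v \<or>
      u = cycle_succ m u' \<and> v = cycle_succ n v'")
    case True
    then have "u mod d = v mod d \<longleftrightarrow> u' mod d = v' mod d" using class_succ by auto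
    then show ?thesis by (simp only: diagonal_joining.simps pred_iff add.commute)
  next
    case False
    then have "of_bool (u' = cycle_succ m u \<and> v' = cycle_succ n v) = (0 :: real)"
      "of_bool (u = cycle_succ m u' \<and> v = cycle_succ n v') = (0 :: real)"
      by auto
    then show ?thesis by (simp only: diagonal_joining.simps pred_iff add_0 mult_zero_right)
  qed
qed

lemma weight_joining_diagonal:
  assumes m: "3 \<le> m" and n: "3 \<le> n" and d: "0 < d" "d dvd m" "d dvd n"
  shows "weight_joining {..<m} (cycle_weight m) {..<n} (cycle_weight n) (diagonal_joining m n d)"
proof -
  have m_pos: "0 < m" and n_pos: "0 < n" using m n by simp_all
  let ?W = "{..<m} \<times> {..<n}" and ?r = "wdeg ({..<m} \<times> {..<n}) (diagonal_joining m n d)"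
  have marginal_fst: "(\<Sum>v<n. ?r (u, v)) = 1 / real m" if "u < m" for u
  proof -
    have "(\<Sum>v<n. ?r (u, v)) =
        real d / (real m * real n) * (\<Sum>v<n. of_bool (v mod d = u mod d))"
      using that m n
      by (simp add: wdeg_diagonal_joining sum_distrib_left eq_commute mult.commute del: sum_of_bool_eq)
    also have "\<dots> = 1 / real m"
      using d n by (simp add: sum_of_bool_mod_eq real_of_nat_div del: sum_of_bool_eq)
    finally show ?thesis .
  qed
  have marginal_snd: "(\<Sum>u<m. ?r (u, v)) = 1 / real n" if "v < n" for v
  proof -
    have "(\<Sum>u<m. ?r (u, v)) =
        real d / (real m * real n) * (\<Sum>u<m. of_bool (u mod d = v mod d))"
      using that m n
      by (simp add: wdeg_diagonal_joining sum_distrib_left mult.commute del: sum_of_bool_eq)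
    also have "\<dots> = 1 / real n"
      using d m by (simp add: sum_of_bool_mod_eq real_of_nat_div del: sum_of_bool_eq)
    finally show ?thesis .
  qed
  have "weight_fun ?W (diagonal_joining m n d)"
    unfolding weight_fun_def
  proof (intro conjI ballI)
    fix x y assume "x \<in> ?W" "y \<in> ?W"
    then show "0 \<le> diagonal_joining m n d x y" "diagonal_joining m n d x y = diagonal_joining m n d y x"
      using diagonal_joining_commute[OF d(2,3)] by (cases x, cases y, auto)+
  next
    have "(\<Sum>x\<in>?W. ?r x) = (\<Sum>u<m. 1 / real m)"
      by (simp add: sum.cartesian_product' marginal_fst)
    then show "(\<Sum>x\<in>?W. \<Sum>y\<in>?W. diagonal_joining m n d x y) = 1"
      using m by (simp add: wdeg_def)
  qed simp
  moreover have "wdeg {..<m} (cycle_weight m) u * (\<Sum>v'<n. diagonal_joining m n d (u, v) (u', v')) =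
      cycle_weight m u u' * ?r (u, v)" if "u < m" "v < n" "u' < m" for u v u'
    using that m n unfolding sum_diagonal_joining_snd[OF n_pos]
    by (simp add: wdeg_cycle wdeg_diagonal_joining cycle_weight_eq)
  moreover have "wdeg {..<n} (cycle_weight n) v * (\<Sum>u'<m. diagonal_joining m n d (u, v) (u', v')) =
      cycle_weight n v v' * ?r (u, v)" if "u < m" "v < n" "v' < n" for u v v'
    using that m n unfolding sum_diagonal_joining_fst[OF m_pos]
    by (simp add: wdeg_cycle wdeg_diagonal_joining cycle_weight_eq)
  ultimately show ?thesis
    using m n by (simp add: weight_joining_def wdeg_cycle marginal_fst marginal_snd)
qed

lemma cycles_not_strongly_disjoint:
  assumes m: "3 \<le> m" and n: "3 \<le> n"
  shows "\<not> strongly_disjoint (cycle_vertices m) (cycle_weight m) (cycle_vertices n) (cycle_weight n)"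
proof
  assume "strongly_disjoint (cycle_vertices m) (cycle_weight m) (cycle_vertices n) (cycle_weight n)"
  then have "\<forall>x\<in>{..<m} \<times> {..<n}. \<forall>y\<in>{..<m} \<times> {..<n}.
      diagonal_joining m n 1 x y = cycle_weight m (fst x) (fst y) * cycle_weight n (snd x) (snd y)"
    using weight_joining_diagonal[OF m n, of 1] unfolding strongly_disjoint_def cycle_vertices_def by simp
  then have "diagonal_joining m n 1 (0, 0) (1, n - 1) = cycle_weight m 0 1 * cycle_weight n 0 (n - 1)"
    using m n by (simp add: Ball_def)
  moreover have "diagonal_joining m n 1 (0, 0) (1, n - 1) = 0"
    using m n by (simp add: cycle_succ_def cycle_pred_def) arith
  moreover have "cycle_weight m 0 1 * cycle_weight n 0 (n - 1) \<noteq> 0"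
    using m n by (simp add: cycle_weight_def)
  ultimately show False by simp
qed

lemma cycles_weakly_disjoint_imp_coprime:
  assumes m: "3 \<le> m" and n: "3 \<le> n"
    and "weakly_disjoint (cycle_vertices m) (cycle_weight m) (cycle_vertices n) (cycle_weight n)"
  shows "coprime m n"
proof (rule ccontr)
  assume "\<not> coprime m n"
  define d where "d = gcd m n"
  have "d \<noteq> 1" "0 < d"
    using \<open>\<not> coprime m n\<close> m by (simp_all add: d_def coprime_iff_gcd_eq_1)
  then have "2 \<le> d" by linarith
  have "\<forall>u<m. \<forall>v<n. wdeg ({..<m} \<times> {..<n}) (diagonal_joining m n d) (u, v) =
      wdeg {..<m} (cycle_weight m) u * wdeg {..<n} (cycle_weight n) v"
    using assms(3) weight_joining_diagonal[OF m n, of d] \<open>0 < d\<close>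
    unfolding weakly_disjoint_def cycle_vertices_def d_def by simp
  then have "wdeg ({..<m} \<times> {..<n}) (diagonal_joining m n d) (0, 1) = 1 / real m * (1 / real n)"
    using m n by (simp add: wdeg_cycle)
  moreover have "wdeg ({..<m} \<times> {..<n}) (diagonal_joining m n d) (0, 1) = 0"
    using m n \<open>2 \<le> d\<close> by (simp add: wdeg_diagonal_joining)
  ultimately show False using m n by simp
qed

lemma coprime_imp_cycles_weakly_disjoint:
  assumes "3 \<le> m" "3 \<le> n" "coprime m n"
  shows "weakly_disjoint (cycle_vertices m) (cycle_weight m) (cycle_vertices n) (cycle_weight n)"
  using assms by (simp add: weakly_disjoint_def cycle_vertices_def wdeg_cycle_joining_coprime wdeg_cycle)

theorem proposition3p7:
  fixes m n :: nat
  assumes "m \<ge> 3" and "n \<ge> 3"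
  shows "\<not> strongly_disjoint (cycle_vertices m) (cycle_weight m) (cycle_vertices n) (cycle_weight n)
    \<and> (weakly_disjoint (cycle_vertices m) (cycle_weight m) (cycle_vertices n) (cycle_weight n)
         \<longleftrightarrow> gcd m n = 1)"
proof -
  have "weakly_disjoint (cycle_vertices m) (cycle_weight m) (cycle_vertices n) (cycle_weight n)
      \<longleftrightarrow> coprime m n"
    using assms cycles_weakly_disjoint_imp_coprime coprime_imp_cycles_weakly_disjoint by blast
  then show ?thesis
    using cycles_not_strongly_disjoint[OF assms] by (simp add: coprime_iff_gcd_eq_1)
qed

end
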